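(* For any positive numbers $c_1,c_2$, any $t\ge0$, and any nonnegative numbers $B_0,B_1,\dots,B_t$, \[ c_1\sqrt{\sum_{k=0}^tB_k^2}-\sum_{k=0}^t\frac{B_k^2}{c_2}\sqrt{\sum_{j=0}^kB_j^2}\le 2c_1^{3/2}c_2^{1/2}. \] *)

theory Defs
  imports Complex_Main
begin

end

theory Submission
  imports Defs
begin

text \<open>Let \<open>S k = (\<Sum>j=0..k. (B j)^2)\<close> and \<open>u = sqrt (S t)\<close>. Telescoping the elementary
  bound \<open>x^3 - y^3 \<le> 2 (x^2 - y^2) x\<close> along \<open>sqrt (S 0) \<le> \<dots> \<le> sqrt (S t)\<close> shows that the
  subtracted sum is at least \<open>u^3 / (2 c2)\<close>. It remains to bound \<open>c1 u - u^3 / (2 c2)\<close>: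
  for \<open>u \<le> 2 sqrt (c1 c2)\<close> the linear term alone is at most \<open>2 c1 sqrt (c1 c2)\<close>, and for
  larger \<open>u\<close> the cubic term dominates.\<close>

lemma cube_diff_le_square_diff:
  fixes u v :: real
  assumes "0 \<le> v" "v \<le> u"
  shows "u^3 - v^3 \<le> 2 * (u^2 - v^2) * u"
proof -
  have "v * v \<le> u * u" using assms by (intro mult_mono) auto
  moreover have "0 \<le> u * v" using assms by simp
  ultimately have "0 \<le> u^2 + u * v - v^2"
    unfolding power2_eq_square by linarith
  then have "0 \<le> (u - v) * (u^2 + u * v - v^2)"
    using assms by simp
  thus ?thesis by (simp add: algebra_simps power2_eq_square power3_eq_cube)
qed

lemma sqrt_partial_sum_cube_le:
  fixes a :: "nat \<Rightarrow> real"
  assumes "\<And>k. k \<le> n \<Longrightarrow> 0 \<le> a k"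
  shows "(sqrt (\<Sum>j=0..n. a j))^3 \<le> 2 * (\<Sum>k=0..n. a k * sqrt (\<Sum>j=0..k. a j))"
  using assms
proof (induction n)
  case 0
  then show ?case by (simp add: power3_eq_cube)
next
  case (Suc n)
  define S where "S = (\<Sum>j=0..n. a j)"
  have "0 \<le> S" unfolding S_def using Suc.prems by (auto intro: sum_nonneg)
  moreover have "0 \<le> a (Suc n)" using Suc.prems by simp
  ultimately have "(sqrt (S + a (Suc n)))^3 - (sqrt S)^3
      \<le> 2 * ((sqrt (S + a (Suc n)))^2 - (sqrt S)^2) * sqrt (S + a (Suc n))"
    by (intro cube_diff_le_square_diff) auto
  also have "\<dots> = 2 * (a (Suc n) * sqrt (S + a (Suc n)))"
    using \<open>0 \<le> S\<close> \<open>0 \<le> a (Suc n)\<close> by simp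
  finally show ?case using Suc by (simp add: S_def)
qed

lemma linear_minus_cubic_le:
  fixes c1 c2 u :: real
  assumes "0 < c1" "0 < c2" "0 \<le> u"
  shows "c1 * u - u^3 / (2 * c2) \<le> 2 * c1 * sqrt (c1 * c2)"
proof (cases "u \<le> 2 * sqrt (c1 * c2)")
  case True
  then have "c1 * u \<le> 2 * c1 * sqrt (c1 * c2)" using assms by simp
  moreover have "0 \<le> u^3 / (2 * c2)" using assms by simp
  ultimately show ?thesis by linarith
next
  case False
  then have "(2 * sqrt (c1 * c2))^2 \<le> u^2"
    using assms by (intro power_mono) auto
  then have "4 * c1 * c2 \<le> u^2" using assms by (simp add: power_mult_distrib)
  then have "4 * c1 * c2 * u \<le> u^3"
    using assms by (metis mult_right_mono power2_eq_square power3_eq_cube mult.assoc)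
  moreover have "0 \<le> c1 * c2 * u" using assms by simp
  ultimately have "2 * c1 * c2 * u \<le> u^3" by linarith
  then have "c1 * u \<le> u^3 / (2 * c2)" using assms by (simp add: pos_le_divide_eq mult_ac)
  moreover have "0 \<le> 2 * c1 * sqrt (c1 * c2)" using assms by simp
  ultimately show ?thesis by linarith
qed

lemma powr_three_halves_times_powr_half:
  fixes x y :: real
  assumes "0 < x" "0 < y"
  shows "x powr (3/2) * y powr (1/2) = x * sqrt (x * y)"
proof -
  have "x powr (3/2) = x powr (1 + 1/2)" by simp
  also have "\<dots> = x * sqrt x" using assms by (subst powr_add) (simp add: powr_half_sqrt)
  finally show ?thesis using assms by (simp add: powr_half_sqrt real_sqrt_mult)
qed

theorem lemma27:
  fixes c1 c2 :: real and t :: nat and B :: "nat \<Rightarrow> real"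
  assumes "c1 > 0" and "c2 > 0"
    and "\<And>k. k \<le> t \<Longrightarrow> B k \<ge> 0"
  shows "c1 * sqrt (\<Sum>k=0..t. (B k)^2)
           - (\<Sum>k=0..t. ((B k)^2 / c2) * sqrt (\<Sum>j=0..k. (B j)^2))
         \<le> 2 * c1 powr (3/2) * c2 powr (1/2)"
proof -
  define u where "u = sqrt (\<Sum>k=0..t. (B k)^2)"
  define T where "T = (\<Sum>k=0..t. (B k)^2 * sqrt (\<Sum>j=0..k. (B j)^2))"
  have "0 \<le> u" unfolding u_def by (simp add: sum_nonneg)
  have "u^3 \<le> 2 * T"
    unfolding u_def T_def by (rule sqrt_partial_sum_cube_le) simp
  then have "u^3 / (2 * c2) \<le> T / c2"
    using assms(2) by (simp add: field_simps)
  moreover have "(\<Sum>k=0..t. ((B k)^2 / c2) * sqrt (\<Sum>j=0..k. (B j)^2)) = T / c2"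
    unfolding T_def by (simp add: sum_divide_distrib)
  moreover have "c1 * u - u^3 / (2 * c2) \<le> 2 * c1 * sqrt (c1 * c2)"
    using assms(1,2) \<open>0 \<le> u\<close> by (rule linear_minus_cubic_le)
  moreover have "2 * c1 powr (3/2) * c2 powr (1/2) = 2 * c1 * sqrt (c1 * c2)"
    using powr_three_halves_times_powr_half[OF assms(1,2)] by simp
  ultimately show ?thesis unfolding u_def by linarith
qed

end
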